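(* Let $X$ be a precubical set and consider the chain complex $\mathbb{Z}[X_2]\xrightarrow{\partial_2}\mathbb{Z}[X_1]\xrightarrow{\partial_1}\mathbb{Z}[X_0]$ (the low-degree part of the cellular chain complex $C(|X|;\mathbb{Z})$), where $\partial_1(\sigma)=d_{+1}\sigma-d_{-1}\sigma$ for $\sigma\in X_1$ and $\partial_2(\theta)=d_{+1}\theta+d_{-2}\theta-d_{-1}\theta-d_{+2}\theta$ for $\theta\in X_2$. If $z=\sum_{\sigma\in X_1}n_\sigma\sigma$ is a $1$-cycle ($\partial_1 z=0$) with all coefficients $n_\sigma\ge 0$ and $z$ represents $0$ in $H_1(C(|X|;\mathbb{Z}))$ (i.e. $z\in\mathrm{im}\,\partial_2$), then $z=0$.
   Context: $\square$ is the smallest subcategory of the category of posets and monotone maps closed under cartesian products (unit $[0]=\{0\}$) containing $\delta_-,\delta_+:[0]\to[1]=\{0<1\}$ (sending $0$ to $0$, resp. $1$); its objects are the $[1]^n$. A precubical set is a functor $X:\square^{op}\to\mathbf{Set}$; $X_n=X([1]^n)$, and $d_{-i},d_{+i}:X_n\to X_{n-1}$ ($1\le i\le n$) are the images of the $\square$-morphisms $[1]^{i-1}\times\delta_-\times[1]^{n-i}$ and $[1]^{i-1}\times\delta_+\times[1]^{n-i}$. $\mathbb{Z}[S]$ is the free abelian group on a set $S$. The geometric realization $|X|$ is a CW complex with one $n$-cell per element of $X_n$, and (up to sign) its cellular chain complex in degrees $\le 2$ is the one displayed. *)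

theory Defs
  imports Main
begin

text \<open>A precubical set, presented by its cell sets X n and face maps.
  d n s i : X n \<rightarrow> X (n-1) for 1 \<le> i \<le> n, where s = True means d_{+i}
  and s = False means d_{-i}.  The face maps are the images of the
  coface morphisms of the box category; functoriality on the box category
  is equivalent to the precubical identities
  d_{a,i} d_{b,j} = d_{b,j-1} d_{a,i} for i < j.\<close>

definition precubical :: "(nat \<Rightarrow> 'a set) \<Rightarrow> (nat \<Rightarrow> bool \<Rightarrow> nat \<Rightarrow> 'a \<Rightarrow> 'a) \<Rightarrow> bool" where
  "precubical X d \<longleftrightarrow>
     (\<forall>n s i x. x \<in> X n \<and> 1 \<le> i \<and> i \<le> n \<longrightarrow> d n s i x \<in> X (n - 1)) \<and>
     (\<forall>n a b i j x. x \<in> X n \<and> 1 \<le> i \<and> i < j \<and> j \<le> n \<longrightarrow>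
        d (n - 1) a i (d n b j x) = d (n - 1) b (j - 1) (d n a i x))"

text \<open>An element of Z[X n]: a finitely supported integer function supported in X n.\<close>
definition chain :: "(nat \<Rightarrow> 'a set) \<Rightarrow> nat \<Rightarrow> ('a \<Rightarrow> int) \<Rightarrow> bool" where
  "chain X n c \<longleftrightarrow> finite {x. c x \<noteq> 0} \<and> {x. c x \<noteq> 0} \<subseteq> X n"

definition bd1 :: "(nat \<Rightarrow> bool \<Rightarrow> nat \<Rightarrow> 'a \<Rightarrow> 'a) \<Rightarrow> ('a \<Rightarrow> int) \<Rightarrow> ('a \<Rightarrow> int)" where
  "bd1 d c = (\<lambda>v. \<Sum>\<sigma>\<in>{x. c x \<noteq> 0}.
      c \<sigma> * (of_bool (d 1 True 1 \<sigma> = v) - of_bool (d 1 False 1 \<sigma> = v)))"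

definition bd2 :: "(nat \<Rightarrow> bool \<Rightarrow> nat \<Rightarrow> 'a \<Rightarrow> 'a) \<Rightarrow> ('a \<Rightarrow> int) \<Rightarrow> ('a \<Rightarrow> int)" where
  "bd2 d c = (\<lambda>e. \<Sum>\<theta>\<in>{x. c x \<noteq> 0}.
      c \<theta> * (of_bool (d 2 True 1 \<theta> = e) + of_bool (d 2 False 2 \<theta> = e)
              - of_bool (d 2 False 1 \<theta> = e) - of_bool (d 2 True 2 \<theta> = e)))"

end

theory Submission
  imports Defs
begin

(* The argument uses the augmentation (total coefficient sum) of finitely
   supported integer chains, aug c = \<Sum> of the coefficients of c.
   The boundary of a single 2-cube, d_{+1} + d_{-2} - d_{-1} - d_{+2}, has
   augmentation 1 + 1 - 1 - 1 = 0; by linearity aug (bd2 d c) = 0 for every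
   2-chain c, i.e. the augmentation factors through H_1.  A 1-chain with
   nonnegative coefficients and augmentation 0 has all coefficients 0.
   Hence a nonnegative 1-chain in the image of bd2 vanishes. *)

definition aug :: "('a \<Rightarrow> int) \<Rightarrow> int" where
  "aug c = (\<Sum>x\<in>{x. c x \<noteq> 0}. c x)"

lemma aug_eq_sum_superset:
  assumes "finite E" and "{x. c x \<noteq> 0} \<subseteq> E"
  shows "aug c = (\<Sum>x\<in>E. c x)"
  unfolding aug_def by (rule sum.mono_neutral_left) (use assms in auto)

lemma cube_boundary_sum_zero:
  fixes d :: "nat \<Rightarrow> bool \<Rightarrow> nat \<Rightarrow> 'a \<Rightarrow> 'a"
  assumes "finite E"
    and "{d 2 True 1 \<theta>, d 2 False 2 \<theta>, d 2 False 1 \<theta>, d 2 True 2 \<theta>} \<subseteq> E"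
  shows "(\<Sum>e\<in>E. of_bool (d 2 True 1 \<theta> = e) + of_bool (d 2 False 2 \<theta> = e)
            - of_bool (d 2 False 1 \<theta> = e) - of_bool (d 2 True 2 \<theta> = e) :: int) = 0"
  using assms by (simp add: sum.distrib sum_subtractf of_bool_def sum.delta)

text \<open>The augmentation vanishes on boundaries of 2-chains: exchange the two finite sums
  and apply the previous lemma to each cube of the support.\<close>
lemma aug_bd2:
  fixes d :: "nat \<Rightarrow> bool \<Rightarrow> nat \<Rightarrow> 'a \<Rightarrow> 'a" and c :: "'a \<Rightarrow> int"
  assumes fin: "finite {x. c x \<noteq> 0}"
  shows "aug (bd2 d c) = 0"
proof -
  define S where "S = {x. c x \<noteq> 0}"
  define faces where "faces \<theta> = {d 2 True 1 \<theta>, d 2 False 2 \<theta>, d 2 False 1 \<theta>, d 2 True 2 \<theta>}" for \<theta>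
  define E where "E = (\<Union>\<theta>\<in>S. faces \<theta>)"
  define g where "g \<theta> e = (of_bool (d 2 True 1 \<theta> = e) + of_bool (d 2 False 2 \<theta> = e)
              - of_bool (d 2 False 1 \<theta> = e) - of_bool (d 2 True 2 \<theta> = e) :: int)" for \<theta> e
  have finE: "finite E" using fin by (simp add: E_def S_def faces_def)
  have bd2_eq: "bd2 d c e = (\<Sum>\<theta>\<in>S. c \<theta> * g \<theta> e)" for e
    by (simp add: bd2_def S_def g_def)
  have "{e. bd2 d c e \<noteq> 0} \<subseteq> E"
  proof
    fix e assume "e \<in> {e. bd2 d c e \<noteq> 0}"
    then obtain \<theta> where "\<theta> \<in> S" and "g \<theta> e \<noteq> 0"
      unfolding bd2_eq by (auto elim: sum.not_neutral_contains_not_neutral)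
    moreover have "g \<theta> e = 0" if "e \<notin> faces \<theta>"
      using that by (auto simp: g_def faces_def)
    ultimately show "e \<in> E" by (auto simp: E_def)
  qed
  then have "aug (bd2 d c) = (\<Sum>e\<in>E. \<Sum>\<theta>\<in>S. c \<theta> * g \<theta> e)"
    using finE by (simp add: aug_eq_sum_superset bd2_eq)
  also have "\<dots> = (\<Sum>\<theta>\<in>S. c \<theta> * (\<Sum>e\<in>E. g \<theta> e))"
    by (simp add: sum.swap[of _ E] sum_distrib_left)
  also have "\<dots> = 0"
  proof -
    have "(\<Sum>e\<in>E. g \<theta> e) = 0" if "\<theta> \<in> S" for \<theta>
      unfolding g_def using finE that
      by (intro cube_boundary_sum_zero) (auto simp: E_def faces_def)
    then show ?thesis by simp
  qed
  finally show ?thesis .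
qed

lemma nonneg_aug_zero:
  fixes z :: "'a \<Rightarrow> int"
  assumes "finite {x. z x \<noteq> 0}" and "\<forall>x. z x \<ge> 0" and "aug z = 0"
  shows "z = (\<lambda>_. 0)"
proof -
  have "\<forall>x\<in>{x. z x \<noteq> 0}. z x = 0"
    using assms by (simp add: aug_def sum_nonneg_eq_0_iff)
  then show ?thesis by auto
qed

theorem mainTheorem10:
  fixes X :: "nat \<Rightarrow> 'a set" and d :: "nat \<Rightarrow> bool \<Rightarrow> nat \<Rightarrow> 'a \<Rightarrow> 'a" and z :: "'a \<Rightarrow> int"
  assumes "precubical X d"
    and "chain X 1 z"
    and "\<forall>\<sigma>. z \<sigma> \<ge> 0"
    and "bd1 d z = (\<lambda>_. 0)"
    and "\<exists>c. chain X 2 c \<and> bd2 d c = z"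
  shows "z = (\<lambda>_. 0)"
proof -
  obtain c where c: "chain X 2 c" and z_bd: "bd2 d c = z" using assms(5) by blast
  have "aug z = 0"
    using aug_bd2[of c d] c by (simp add: chain_def z_bd)
  moreover have "finite {x. z x \<noteq> 0}" using assms(2) by (simp add: chain_def)
  ultimately show ?thesis using nonneg_aug_zero assms(3) by blast
qed

end
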